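(* For every integer $k\ge1$, the $2\times2$ absorbing game \[ \begin{bmatrix}0;\,(\tfrac1k,k^* ) & 1^*\\ 1^* & k^*\end{bmatrix}, \] i.e. with $g_{11}=0$, $q_{11}=1/k$, $w_{11}=k$; $g_{12}=w_{12}=1$, $q_{12}=1$; $g_{21}=w_{21}=1$, $q_{21}=1$; $g_{22}=w_{22}=k$, $q_{22}=1$, has limit value $v=\lim_{\lambda\to0}v_\lambda=\sqrt k$. *)

theory Defs
  imports Complex_Main
begin

text \<open>2x2 matrices are functions nat => nat => real on indices 0,1 (row index i: player 1,
  the maximizer; column index j: player 2, the minimizer).\<close>

definition mix2 :: "real \<Rightarrow> real \<Rightarrow> (nat \<Rightarrow> nat \<Rightarrow> real) \<Rightarrow> real" where
  "mix2 x y A = x * y * A 0 0 + x * (1 - y) * A 0 1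
              + (1 - x) * y * A 1 0 + (1 - x) * (1 - y) * A 1 1"

definition val2 :: "(nat \<Rightarrow> nat \<Rightarrow> real) \<Rightarrow> real" where
  "val2 A = (SUP x\<in>{0..1}. INF y\<in>{0..1}. mix2 x y A)"

text \<open>Discounted value of the 2x2 absorbing game with non-absorbing payoffs g, absorption
  probabilities q and absorbing payoffs w: the unique fixed point of the Shapley operator
  v \<mapsto> val [ l g + (1 - l)(q w + (1 - q) v) ].\<close>
definition disc_value ::
  "(nat \<Rightarrow> nat \<Rightarrow> real) \<Rightarrow> (nat \<Rightarrow> nat \<Rightarrow> real) \<Rightarrow> (nat \<Rightarrow> nat \<Rightarrow> real) \<Rightarrow> real \<Rightarrow> real" where
  "disc_value g q w l =
     (THE v. v = val2 (\<lambda>i j. l * g i j + (1 - l) * (q i j * w i j + (1 - q i j) * v)))"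

end

(*
  The Shapley operator v |-> val2 (l g + (1 - l) (q w + (1 - q) v)) is a (1 - l)-contraction,
  because val2 is monotone and commutes with adding constants; so any fixed point we exhibit
  is the discounted value. Here the Shapley matrix at v is [[a, 1], [1, k]] with
  a = (1 - l) (1 + c v) and c = 1 - 1/k. If a <= 1 its value is 1, which settles k = 1.
  If a > 1 there is no saddle point, and the strategy (k - 1)/(a + k - 2), equalizing for both
  players, gives the value (a k - 1)/(a + k - 2). The fixed-point equation thus becomes the
  quadratic (1 - l) c v^2 + (k - 2) l v + 1 - (1 - l) k = 0, whose larger root depends
  continuously on l and equals sqrt ((k - 1)/c) = sqrt k at l = 0.
*)

theory Submission
  imports Defs "HOL-Library.Quadratic_Discriminant"
begin

lemma min_le_convex_comb:
  fixes a b t :: real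
  assumes "0 \<le> t" "t \<le> 1"
  shows "min a b \<le> (1 - t) * a + t * b"
proof -
  have "(1 - t) * min a b + t * min a b \<le> (1 - t) * a + t * b"
    using assms by (intro add_mono mult_left_mono) auto
  then show ?thesis by (simp add: algebra_simps)
qed

lemma mix2_affine_right: "mix2 x y A = (1 - y) * mix2 x 0 A + y * mix2 x 1 A"
  by (simp add: mix2_def algebra_simps)

lemma mix2_mono:
  assumes "x \<in> {0..1}" "y \<in> {0..1}" "\<And>i j. A i j \<le> B i j"
  shows "mix2 x y A \<le> mix2 x y B"
  using assms unfolding mix2_def by (intro add_mono mult_left_mono) auto

lemma mix2_add_const: "mix2 x y (\<lambda>i j. A i j + d) = mix2 x y A + d"
  by (simp add: mix2_def algebra_simps)

lemma Inf_mix2_eq_min: "(INF y\<in>{0..1}. mix2 x y A) = min (mix2 x 0 A) (mix2 x 1 A)"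
proof (rule cInf_eq_minimum)
  show "min (mix2 x 0 A) (mix2 x 1 A) \<in> (\<lambda>y. mix2 x y A) ` {0..1}"
    by (cases "mix2 x 0 A \<le> mix2 x 1 A") (auto simp: min_def)
next
  fix z assume "z \<in> (\<lambda>y. mix2 x y A) ` {0..1}"
  then obtain y where "y \<in> {0..1}" "z = mix2 x y A"
    by auto
  then show "min (mix2 x 0 A) (mix2 x 1 A) \<le> z"
    using min_le_convex_comb[of y "mix2 x 0 A" "mix2 x 1 A"] mix2_affine_right[of x y A] by simp
qed

lemma val2_eq_Sup_min: "val2 A = (SUP x\<in>{0..1}. min (mix2 x 0 A) (mix2 x 1 A))"
  by (simp add: val2_def Inf_mix2_eq_min)

lemma bdd_above_min_mix2: "bdd_above ((\<lambda>x. min (mix2 x 0 A) (mix2 x 1 A)) ` {0..1})"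
proof (rule bdd_aboveI2)
  fix x :: real assume "x \<in> {0..1}"
  then have "x * A 0 1 + (1 - x) * A 1 1 \<le> max (A 0 1) (A 1 1)"
    by (intro convex_bound_le) auto
  then show "min (mix2 x 0 A) (mix2 x 1 A) \<le> max (A 0 1) (A 1 1)"
    by (simp add: mix2_def)
qed

lemma val2_le_shift:
  assumes "\<And>i j. A i j \<le> B i j + d"
  shows "val2 A \<le> val2 B + d"
proof -
  have "min (mix2 x 0 A) (mix2 x 1 A) \<le> val2 B + d" if "x \<in> {0..1}" for x
  proof -
    have "mix2 x y A \<le> mix2 x y B + d" if "y \<in> {0..1}" for y
      using mix2_mono[OF \<open>x \<in> {0..1}\<close> that assms] by (simp add: mix2_add_const)
    from this[of 0] this[of 1]
    have "min (mix2 x 0 A) (mix2 x 1 A) \<le> min (mix2 x 0 B) (mix2 x 1 B) + d"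
      by (auto simp: min_def)
    also have "\<dots> \<le> val2 B + d"
      unfolding val2_eq_Sup_min using that by (intro add_right_mono cSUP_upper bdd_above_min_mix2)
    finally show ?thesis .
  qed
  then show ?thesis
    unfolding val2_eq_Sup_min[of A] by (intro cSUP_least) auto
qed

lemma val2_eqI:
  assumes "x0 \<in> {0..1}" "y0 \<in> {0..1}"
    and guarantee: "\<And>y. y \<in> {0..1} \<Longrightarrow> v \<le> mix2 x0 y A"
    and defence: "\<And>x. x \<in> {0..1} \<Longrightarrow> mix2 x y0 A \<le> v"
  shows "val2 A = v"
proof -
  have bound: "min (mix2 x 0 A) (mix2 x 1 A) \<le> v" if "x \<in> {0..1}" for x
    using min_le_convex_comb[of y0 "mix2 x 0 A" "mix2 x 1 A"] defence[OF that] assms(2)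
    by (simp add: mix2_affine_right[of x y0 A])
  have "v \<le> min (mix2 x0 0 A) (mix2 x0 1 A)"
    using guarantee by simp
  also have "\<dots> \<le> val2 A"
    unfolding val2_eq_Sup_min using assms(1) by (intro cSUP_upper bdd_above_min_mix2)
  finally have "v \<le> val2 A" .
  moreover have "val2 A \<le> v"
    unfolding val2_eq_Sup_min by (rule cSUP_least) (use bound in auto)
  ultimately show ?thesis
    by linarith
qed

lemma val2_eq_one:
  assumes "1 \<le> K" "A 0 0 \<le> 1" "A 0 1 = 1" "A 1 0 = 1" "A 1 1 = K"
  shows "val2 A = 1"
proof (rule val2_eqI[of 0 1])
  fix y :: real assume "y \<in> {0..1}"
  then have "(1 - y) * 1 \<le> (1 - y) * K"
    using assms by (intro mult_left_mono) auto
  then show "1 \<le> mix2 0 y A"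
    using assms by (simp add: mix2_def algebra_simps)
next
  fix x :: real assume "x \<in> {0..1}"
  then have "x * A 0 0 \<le> x * 1"
    using assms by (intro mult_left_mono) auto
  then show "mix2 x 1 A \<le> 1"
    using assms by (simp add: mix2_def algebra_simps)
qed auto

lemma val2_eq_ratio:
  assumes "1 \<le> K" "1 < A 0 0" "A 0 1 = 1" "A 1 0 = 1" "A 1 1 = K"
  shows "val2 A = (A 0 0 * K - 1) / (A 0 0 + K - 2)"
proof -
  define a r where "a = A 0 0" and "r = (a * K - 1) / (a + K - 2)"
  define s where "s = (K - 1) / (a + K - 2)"
  have pos: "0 < a + K - 2"
    using assms by (simp add: a_def)
  have s: "s \<in> {0..1}"
    using assms pos by (simp add: s_def a_def field_simps)
  have sD: "s * (a + K - 2) = K - 1"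
    using pos by (simp add: s_def)
  have "(s * a + (1 - s)) * (a + K - 2) = a * K - 1" and "(s + (1 - s) * K) * (a + K - 2) = a * K - 1"
    using sD by algebra+
  then have row0: "s * a + (1 - s) = r" and row1: "s + (1 - s) * K = r"
    using pos by (simp_all add: r_def eq_divide_eq)
  have equalizer: "mix2 x s A = r" for x
  proof -
    have "mix2 x s A = x * (s * a + (1 - s)) + (1 - x) * (s + (1 - s) * K)"
      using assms by (simp add: mix2_def a_def algebra_simps)
    also have "\<dots> = r"
      unfolding row0 row1 by (simp add: algebra_simps)
    finally show ?thesis .
  qed
  have "mix2 s y A = mix2 y s A" for y
    using assms by (simp add: mix2_def algebra_simps)
  then have "val2 A = r"
    using s equalizer by (intro val2_eqI[of s s]) auto
  then show ?thesis
    by (simp add: r_def a_def)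
qed

definition shapley_matrix ::
  "(nat \<Rightarrow> nat \<Rightarrow> real) \<Rightarrow> (nat \<Rightarrow> nat \<Rightarrow> real) \<Rightarrow> (nat \<Rightarrow> nat \<Rightarrow> real) \<Rightarrow> real \<Rightarrow> real
    \<Rightarrow> nat \<Rightarrow> nat \<Rightarrow> real" where
  "shapley_matrix g q w l v = (\<lambda>i j. l * g i j + (1 - l) * (q i j * w i j + (1 - q i j) * v))"

lemma val2_shapley_matrix_le:
  assumes "0 \<le> l" "l \<le> 1" and q: "\<And>i j. 0 \<le> q i j \<and> q i j \<le> 1"
  shows "val2 (shapley_matrix g q w l u) \<le> val2 (shapley_matrix g q w l v) + (1 - l) * \<bar>u - v\<bar>"
proof (rule val2_le_shift)
  fix i j
  have "(1 - q i j) * (u - v) \<le> (1 - q i j) * \<bar>u - v\<bar>"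
    using q[of i j] by (intro mult_left_mono) auto
  also have "\<dots> \<le> \<bar>u - v\<bar>"
    using q[of i j] by (intro mult_left_le_one_le) auto
  finally have "(1 - l) * ((1 - q i j) * (u - v)) \<le> (1 - l) * \<bar>u - v\<bar>"
    using assms by (intro mult_left_mono) auto
  then show "shapley_matrix g q w l u i j \<le> shapley_matrix g q w l v i j + (1 - l) * \<bar>u - v\<bar>"
    by (simp add: shapley_matrix_def algebra_simps)
qed

lemma disc_value_eqI:
  assumes "0 < l" "l \<le> 1" "\<And>i j. 0 \<le> q i j \<and> q i j \<le> 1"
    and fixed_point: "v = val2 (shapley_matrix g q w l v)"
  shows "disc_value g q w l = v"
  unfolding disc_value_def shapley_matrix_def[symmetric]
proof (rule the_equality)
  fix u assume u: "u = val2 (shapley_matrix g q w l u)"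
  have "\<bar>u - v\<bar> \<le> (1 - l) * \<bar>u - v\<bar>"
    using val2_shapley_matrix_le[of l q g w u v] val2_shapley_matrix_le[of l q g w v u]
      assms u by (simp add: abs_le_iff abs_minus_commute)
  then have "l * \<bar>u - v\<bar> \<le> 0"
    by (simp add: algebra_simps)
  then show "u = v"
    using \<open>0 < l\<close> by (simp add: mult_le_0_iff)
qed (rule fixed_point)

definition game_payoff :: "nat \<Rightarrow> nat \<Rightarrow> nat \<Rightarrow> real" where
  "game_payoff k = (\<lambda>i j. if i = 0 \<and> j = 0 then 0 else if i = 1 \<and> j = 1 then real k else 1)"

definition game_absorption :: "nat \<Rightarrow> nat \<Rightarrow> nat \<Rightarrow> real" where
  "game_absorption k = (\<lambda>i j. if i = 0 \<and> j = 0 then 1 / real k else 1)"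

definition game_absorbing_payoff :: "nat \<Rightarrow> nat \<Rightarrow> nat \<Rightarrow> real" where
  "game_absorbing_payoff k =
     (\<lambda>i j. if i = 1 \<and> j = 1 then real k else if i = 0 \<and> j = 0 then real k else 1)"

lemma game_absorption_bounds: "0 \<le> game_absorption k i j \<and> game_absorption k i j \<le> 1"
  by (cases k) (simp_all add: game_absorption_def)

lemma shapley_matrix_game:
  assumes "1 \<le> k"
  shows "shapley_matrix (game_payoff k) (game_absorption k) (game_absorbing_payoff k) l v =
    (\<lambda>i j. if i = 0 \<and> j = 0 then (1 - l) * (1 + (1 - 1 / real k) * v)
           else if i = 1 \<and> j = 1 then real k else 1)"
proof -
  have "real k \<noteq> 0"
    using assms by simp
  then show ?thesis
    by (auto simp: fun_eq_iff shapley_matrix_def game_payoff_def game_absorption_def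
        game_absorbing_payoff_def field_simps)
qed

lemma disc_value_game_one:
  assumes "0 < l" "l \<le> 1"
  shows "disc_value (game_payoff 1) (game_absorption 1) (game_absorbing_payoff 1) l = 1"
proof (rule disc_value_eqI)
  show "1 = val2 (shapley_matrix (game_payoff 1) (game_absorption 1) (game_absorbing_payoff 1) l 1)"
    using assms by (intro val2_eq_one[of 1, symmetric]) (simp_all add: shapley_matrix_game)
qed (use assms game_absorption_bounds in auto)

definition game_discrim :: "nat \<Rightarrow> real \<Rightarrow> real" where
  "game_discrim k l = discrim ((1 - l) * (1 - 1 / real k)) ((real k - 2) * l) (1 - (1 - l) * real k)"

definition game_root :: "nat \<Rightarrow> real \<Rightarrow> real" where
  "game_root k l =
     (- ((real k - 2) * l) + sqrt (game_discrim k l)) / (2 * ((1 - l) * (1 - 1 / real k)))"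

lemma game_discrim_at_0:
  assumes "1 \<le> k"
  shows "game_discrim k 0 = (2 * (1 - 1 / real k) * sqrt (real k))\<^sup>2"
proof -
  have sqrt_sq: "4 * c * (c * x) = (2 * c * sqrt x)\<^sup>2" if "0 \<le> x" for c x :: real
    using that by (simp add: power_mult_distrib power2_eq_square)
  have "game_discrim k 0 = 4 * (1 - 1 / real k) * ((1 - 1 / real k) * real k)"
    using assms by (simp add: game_discrim_def discrim_def field_simps)
  also have "\<dots> = (2 * (1 - 1 / real k) * sqrt (real k))\<^sup>2"
    by (rule sqrt_sq) simp
  finally show ?thesis .
qed

lemma isCont_game_discrim: "isCont (game_discrim k) l"
  unfolding game_discrim_def discrim_def by (intro continuous_intros)

lemma game_root_tendsto:
  assumes "2 \<le> k"
  shows "(game_root k \<longlongrightarrow> sqrt (real k)) (at_right 0)"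
proof -
  define c where "c = 1 - 1 / real k"
  have c: "0 < c"
    using assms by (simp add: c_def)
  then have cont: "isCont (game_root k) 0"
    unfolding game_root_def[abs_def] c_def[symmetric] by (intro continuous_intros isCont_game_discrim) auto
  have "game_root k 0 = sqrt ((2 * c * sqrt (real k))\<^sup>2) / (2 * c)"
    using assms by (simp add: game_root_def game_discrim_at_0 c_def)
  also have "\<dots> = sqrt (real k)"
    using c by (simp add: abs_mult)
  finally show ?thesis
    using cont unfolding isCont_def by (metis tendsto_within_subset subset_UNIV)
qed

lemma disc_value_game_eq_root:
  assumes "2 \<le> k" "0 < l" "l < 1" "0 \<le> game_discrim k l"
    and absorbing: "1 < (1 - l) * (1 + (1 - 1 / real k) * game_root k l)"
  shows "disc_value (game_payoff k) (game_absorption k) (game_absorbing_payoff k) l = game_root k l"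
proof (rule disc_value_eqI)
  define K c where "K = real k" and "c = 1 - 1 / real k"
  define a where "a = (1 - l) * (1 + c * game_root k l)"
  have K: "2 \<le> K" and c: "c \<noteq> 0" "c * K = K - 1"
    using assms by (auto simp: K_def c_def field_simps)
  have "(1 - l) * c * (game_root k l)\<^sup>2 + (K - 2) * l * game_root k l + (1 - (1 - l) * K) = 0"
    using assms c by (subst discriminant_nonneg) (auto simp: K_def c_def game_root_def game_discrim_def)
  then have "game_root k l * (a + K - 2) = a * K - 1"
    using c(2) unfolding a_def by algebra
  moreover have "0 < a + K - 2"
    using absorbing K by (simp add: a_def c_def)
  ultimately have "game_root k l = (a * K - 1) / (a + K - 2)"
    by (simp add: eq_divide_eq)
  also have "\<dots> = val2 (shapley_matrix (game_payoff k) (game_absorption k) (game_absorbing_payoff k) l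
      (game_root k l))"
    using assms K by (subst val2_eq_ratio[of K]) (simp_all add: shapley_matrix_game a_def K_def c_def)
  finally show "game_root k l = \<dots>" .
qed (use assms game_absorption_bounds in auto)

lemma disc_value_game_tendsto:
  assumes "2 \<le> k"
  shows "((\<lambda>l. disc_value (game_payoff k) (game_absorption k) (game_absorbing_payoff k) l)
           \<longlongrightarrow> sqrt (real k)) (at_right 0)"
proof -
  define c where "c = 1 - 1 / real k"
  have c: "0 < c"
    using assms by (simp add: c_def)
  have lim_discrim: "(game_discrim k \<longlongrightarrow> game_discrim k 0) (at_right 0)"
    using isCont_game_discrim unfolding isCont_def by (metis tendsto_within_subset subset_UNIV)
  have "game_discrim k 0 = (2 * c * sqrt (real k))\<^sup>2"
    using assms by (simp add: game_discrim_at_0 c_def)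
  with assms c have discrim_pos: "\<forall>\<^sub>F l in at_right 0. 0 < game_discrim k l"
    by (intro order_tendstoD(1)[OF lim_discrim]) simp
  have "((\<lambda>l. (1 - l) * (1 + c * game_root k l)) \<longlongrightarrow> (1 - 0) * (1 + c * sqrt (real k))) (at_right 0)"
    using assms by (intro tendsto_intros game_root_tendsto)
  moreover have "1 < (1 - 0) * (1 + c * sqrt (real k))"
    using assms c by (simp add: mult_pos_pos)
  ultimately have absorbing: "\<forall>\<^sub>F l in at_right 0. 1 < (1 - l) * (1 + c * game_root k l)"
    by (rule order_tendstoD(1))
  have small: "\<forall>\<^sub>F l in at_right 0. 0 < l \<and> l < (1::real)"
    unfolding eventually_at_right_field by (intro exI[of _ 1]) auto
  from discrim_pos absorbing small have "\<forall>\<^sub>F l in at_right 0.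
      disc_value (game_payoff k) (game_absorption k) (game_absorbing_payoff k) l = game_root k l"
    by eventually_elim (use assms in \<open>auto simp: c_def intro: disc_value_game_eq_root\<close>)
  with game_root_tendsto[OF assms] show ?thesis
    by (simp add: tendsto_cong)
qed

theorem theorem3:
  fixes k :: nat
  assumes "k \<ge> 1"
  shows "((\<lambda>l. disc_value
            (\<lambda>i j. if i = 0 \<and> j = 0 then 0 else if i = 1 \<and> j = 1 then real k else 1)
            (\<lambda>i j. if i = 0 \<and> j = 0 then 1 / real k else 1)
            (\<lambda>i j. if i = 1 \<and> j = 1 then real k else if i = 0 \<and> j = 0 then real k else 1) l)
          \<longlongrightarrow> sqrt (real k)) (at_right 0)"
proof -
  have "((\<lambda>l. disc_value (game_payoff k) (game_absorption k) (game_absorbing_payoff k) l)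
           \<longlongrightarrow> sqrt (real k)) (at_right 0)"
  proof (cases "k = 1")
    case True
    have "\<forall>\<^sub>F l in at_right 0.
        disc_value (game_payoff k) (game_absorption k) (game_absorbing_payoff k) l = 1"
      unfolding eventually_at_right_field True
      by (intro exI[of _ 1] conjI allI impI disc_value_game_one) auto
    with True show ?thesis
      by (simp add: tendsto_cong)
  next
    case False
    with assms show ?thesis
      by (intro disc_value_game_tendsto) simp
  qed
  then show ?thesis
    unfolding game_payoff_def game_absorption_def game_absorbing_payoff_def .
qed

end
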